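(* Let $0<e_b<1/3$ and, for $a\in[e_b/2,e_b]$, consider the initial triple $(p_X,p_Y,p_Z)=(e_b-a,\;a,\;\tfrac32 e_b-a)$. Fix any finite sequence of B steps and P steps whose first step is a B step, let $(p_X',p_Y',p_Z')$ be the result of applying it, and let $R(a)=1-H_2(p_X'+p_Y')-H_2(p_Z'+p_Y')$. Then the minimum of $R(a)$ over $a\in[e_b/2,e_b]$ (the worst case) is attained at $a=e_b/2$.
   Context: $H_2(p)=-p\log_2 p-(1-p)\log_2(1-p)$. A B step maps $(p_X,p_Y,p_Z)$ to $p_X'=(p_X^2+p_Y^2)/p_S$, $p_Y'=2p_Xp_Y/p_S$, $p_Z'=2(1-p_X-p_Y-p_Z)p_Z/p_S$ with $p_S=1-2(p_X+p_Y)(1-p_X-p_Y)$. A P step maps $(p_X,p_Y,p_Z)$, with $p_I=1-p_X-p_Y-p_Z$, to $p_X'=3p_I^2(p_X+p_Y)+6p_Ip_Xp_Z+3p_X^2p_Y+p_X^3$, $p_Y'=6p_Ip_Yp_Z+3p_X(p_Y^2+p_Z^2)+3p_Yp_Z^2+p_Y^3$, $p_Z'=3p_I(p_Y^2+p_Z^2)+6p_Xp_Yp_Z+3p_Y^2p_Z+p_Z^3$. This is the single-photon SARG04 case, where $e_b$ is the bit error rate and $a$ the (unknown) $Y$-error rate. *)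

theory Defs
  imports Complex_Main
begin

definition H2 :: "real \<Rightarrow> real" where
  "H2 p = - p * log 2 p - (1 - p) * log 2 (1 - p)"

definition B_step :: "real \<times> real \<times> real \<Rightarrow> real \<times> real \<times> real" where
  "B_step t = (case t of (pX, pY, pZ) \<Rightarrow>
     let pS = 1 - 2 * (pX + pY) * (1 - pX - pY) in
     ((pX^2 + pY^2) / pS, 2 * pX * pY / pS, 2 * (1 - pX - pY - pZ) * pZ / pS))"

definition P_step :: "real \<times> real \<times> real \<Rightarrow> real \<times> real \<times> real" where
  "P_step t = (case t of (pX, pY, pZ) \<Rightarrow>
     let pI = 1 - pX - pY - pZ in
     (3 * pI^2 * (pX + pY) + 6 * pI * pX * pZ + 3 * pX^2 * pY + pX^3,
      6 * pI * pY * pZ + 3 * pX * (pY^2 + pZ^2) + 3 * pY * pZ^2 + pY^3,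
      3 * pI * (pY^2 + pZ^2) + 6 * pX * pY * pZ + 3 * pY^2 * pZ + pZ^3))"

fun apply_steps :: "bool list \<Rightarrow> real \<times> real \<times> real \<Rightarrow> real \<times> real \<times> real" where
  "apply_steps [] t = t"
| "apply_steps (s # ss) t = apply_steps ss (if s then B_step t else P_step t)"

definition rate :: "bool list \<Rightarrow> real \<Rightarrow> real \<Rightarrow> real" where
  "rate ss eb a = (case apply_steps ss (eb - a, a, 3/2 * eb - a) of (pX, pY, pZ) \<Rightarrow>
     1 - H2 (pX + pY) - H2 (pZ + pY))"

end

theory Submission
  imports Defs
begin

text \<open>Write a triple as \<open>(s, p\<^sub>Y, p\<^sub>Z)\<close> with \<open>s = p\<^sub>X + p\<^sub>Y\<close>. Both steps map \<open>s\<close> to a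
  function of \<open>s\<close> alone, and on the region \<open>0 \<le> p\<^sub>Y \<le> p\<^sub>X\<close>, \<open>0 < p\<^sub>Z \<le> p\<^sub>I\<close>, which both steps
  preserve, they are monotone in \<open>(p\<^sub>Y, p\<^sub>Z)\<close> for the componentwise order. The initial triples
  lie outside this region, but the first B step moves them into it. A B step depends on
  \<open>(p\<^sub>Y, p\<^sub>Z)\<close> only through \<open>p\<^sub>X p\<^sub>Y\<close> and \<open>p\<^sub>I p\<^sub>Z\<close>, which are both maximal at \<open>a = e\<^sub>b/2\<close> (the
  second one because \<open>e\<^sub>b < 1/3\<close>), so from then on the triple for \<open>a = e\<^sub>b/2\<close> dominates all
  others. Finally \<open>p\<^sub>Y + p\<^sub>Z \<le> 1/2\<close> on the region and \<open>H\<^sub>2\<close> increases on \<open>(0, 1/2]\<close>, so the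
  dominating triple has the least rate.\<close>

lemma mult_diff_self_mono:
  fixes u v c :: real
  assumes "u \<le> v" "u + v \<le> c"
  shows "u * (c - u) \<le> v * (c - v)"
proof -
  have "v * (c - v) - u * (c - u) = (v - u) * (c - u - v)" by (simp add: algebra_simps)
  also have "\<dots> \<ge> 0" using assms by simp
  finally show ?thesis by simp
qed

fun admissible :: "real \<times> real \<times> real \<Rightarrow> bool" where
  "admissible (x, y, z) \<longleftrightarrow> 0 \<le> y \<and> y \<le> x \<and> 0 < z \<and> z \<le> 1 - x - y - z"

fun yz_le :: "real \<times> real \<times> real \<Rightarrow> real \<times> real \<times> real \<Rightarrow> bool" where
  "yz_le (x1, y1, z1) (x2, y2, z2) \<longleftrightarrow> x1 + y1 = x2 + y2 \<and> y1 \<le> y2 \<and> z1 \<le> z2"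

lemma B_denominator_pos: "0 < 1 - 2 * s * (1 - s :: real)"
proof -
  have "1 - 2 * s * (1 - s) = s\<^sup>2 + (1 - s)\<^sup>2" by (simp add: power2_eq_square algebra_simps)
  then show ?thesis by (simp add: sum_power2_gt_zero_iff)
qed

lemma B_step_eq:
  assumes "x + y = s"
  shows "B_step (x, y, z) =
    ((s\<^sup>2 - 2 * x * y) / (1 - 2 * s * (1 - s)), 2 * x * y / (1 - 2 * s * (1 - s)),
     2 * (1 - s - z) * z / (1 - 2 * s * (1 - s)))"
  unfolding assms[symmetric] B_step_def Let_def
  by (simp add: power2_eq_square algebra_simps)

lemma B_step_admissible:
  assumes "0 \<le> x" "0 \<le> y" "0 < z" "z < 1 - x - y"
  shows "admissible (B_step (x, y, z))"
proof -
  define s where "s = x + y"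
  define p where "p = 1 - 2 * s * (1 - s)"
  have p: "0 < p" unfolding p_def by (rule B_denominator_pos)
  have "0 \<le> (x - y)\<^sup>2" by simp
  then have "2 * x * y \<le> s\<^sup>2 - 2 * x * y" unfolding s_def by (simp add: power2_eq_square algebra_simps)
  then have y_le_x: "2 * x * y / p \<le> (s\<^sup>2 - 2 * x * y) / p" using p by (simp add: divide_right_mono)
  have "0 \<le> (1 - s - 2 * z)\<^sup>2" by simp
  then have "2 * (2 * (1 - s - z) * z) \<le> p - s\<^sup>2"
    unfolding p_def by (simp add: power2_eq_square algebra_simps)
  then have "2 * (2 * (1 - s - z) * z) / p \<le> (p - s\<^sup>2) / p"
    using p by (simp add: divide_right_mono)
  moreover have "1 - (s\<^sup>2 - 2 * x * y) / p - 2 * x * y / p = (p - s\<^sup>2) / p"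
    using p by (simp add: field_simps)
  ultimately have "2 * (2 * (1 - s - z) * z / p) \<le> 1 - (s\<^sup>2 - 2 * x * y) / p - 2 * x * y / p"
    by simp
  moreover have "0 < 2 * (1 - s - z) * z / p" using assms p unfolding s_def by simp
  ultimately show ?thesis
    using y_le_x assms p unfolding B_step_eq[OF s_def[symmetric]] p_def[symmetric] by simp
qed

lemma B_step_yz_le:
  assumes "x1 + y1 = s" "x2 + y2 = s"
    and "x1 * y1 \<le> x2 * y2" "z1 * (1 - s - z1) \<le> z2 * (1 - s - z2)"
  shows "yz_le (B_step (x1, y1, z1)) (B_step (x2, y2, z2))"
proof -
  define p where "p = 1 - 2 * s * (1 - s)"
  have p: "0 < p" unfolding p_def by (rule B_denominator_pos)
  have "2 * x1 * y1 / p \<le> 2 * x2 * y2 / p" "2 * (1 - s - z1) * z1 / p \<le> 2 * (1 - s - z2) * z2 / p"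
    using assms(3,4) p by (simp_all add: divide_right_mono algebra_simps)
  then show ?thesis
    unfolding B_step_eq[OF assms(1)] B_step_eq[OF assms(2)] p_def[symmetric]
    by (simp add: diff_divide_distrib)
qed

lemma B_step_admissible_of_admissible:
  assumes "admissible t"
  shows "admissible (B_step t)"
  using assms by (cases t) (auto intro!: B_step_admissible)

lemma B_step_yz_le_of_admissible:
  assumes "admissible (x1, y1, z1)" "admissible (x2, y2, z2)" "yz_le (x1, y1, z1) (x2, y2, z2)"
  shows "yz_le (B_step (x1, y1, z1)) (B_step (x2, y2, z2))"
proof -
  define s where "s = x1 + y1"
  have s2: "x2 + y2 = s" using assms(3) unfolding s_def by simp
  have "y1 * (s - y1) \<le> y2 * (s - y2)" "z1 * (1 - s - z1) \<le> z2 * (1 - s - z2)"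
    using assms s2 unfolding s_def by (intro mult_diff_self_mono; simp)+
  moreover have "s - y1 = x1" "s - y2 = x2" using s2 s_def by auto
  ultimately have "x1 * y1 \<le> x2 * y2" "z1 * (1 - s - z1) \<le> z2 * (1 - s - z2)"
    by (simp_all add: mult.commute)
  with s_def s2 show ?thesis by (intro B_step_yz_le) simp_all
qed

definition P_sum :: "real \<Rightarrow> real" where
  "P_sum s = 3 * (1 - s)\<^sup>2 * s + s ^ 3"

definition P_Y :: "real \<Rightarrow> real \<Rightarrow> real \<Rightarrow> real" where
  "P_Y s y z = 6 * (1 - s - z) * y * z + 3 * (s - y) * (y\<^sup>2 + z\<^sup>2) + 3 * y * z\<^sup>2 + y ^ 3"

definition P_Z :: "real \<Rightarrow> real \<Rightarrow> real \<Rightarrow> real" where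
  "P_Z s y z = 3 * (1 - s - z) * (y\<^sup>2 + z\<^sup>2) + 6 * (s - y) * y * z + 3 * y\<^sup>2 * z + z ^ 3"

lemma P_step_eq:
  assumes "x + y = s"
  shows "P_step (x, y, z) = (P_sum s - P_Y s y z, P_Y s y z, P_Z s y z)"
  unfolding assms[symmetric] P_step_def P_sum_def P_Y_def P_Z_def Let_def
  by (simp add: power2_eq_square power3_eq_cube algebra_simps)

lemma P_Y_mono_y:
  assumes "0 \<le> y1" "y1 \<le> y2" "y2 \<le> s" "0 \<le> z" "z \<le> 1 - s"
  shows "P_Y s y1 z \<le> P_Y s y2 z"
proof -
  have diff: "P_Y s y2 z - P_Y s y1 z
      = (y2 - y1) * (6 * (1 - s - z) * z + 3 * s * (y1 + y2) - 2 * (y1\<^sup>2 + y1 * y2 + y2\<^sup>2))"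
    unfolding P_Y_def by (simp add: power2_eq_square power3_eq_cube algebra_simps)
  have "y1 * y1 \<le> s * y1" "y2 * y2 \<le> s * y2" "y1 * y2 \<le> s * y1" "y1 * y2 \<le> s * y2"
    using assms by (auto intro: mult_right_mono mult_left_mono order_trans)
  moreover have "0 \<le> (1 - s - z) * z" using assms by simp
  ultimately have "0 \<le> 6 * (1 - s - z) * z + 3 * s * (y1 + y2) - 2 * (y1\<^sup>2 + y1 * y2 + y2\<^sup>2)"
    by (simp add: power2_eq_square algebra_simps)
  with diff assms show ?thesis by (metis diff_ge_0_iff_ge zero_le_mult_iff)
qed

lemma P_Y_mono_z:
  assumes "0 \<le> y" "y \<le> s" "0 \<le> z1" "z1 \<le> z2" "z2 \<le> 1 - s"
  shows "P_Y s y z1 \<le> P_Y s y z2"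
proof -
  have diff: "P_Y s y z2 - P_Y s y z1 = (z2 - z1) * (6 * y * (1 - s - z1 - z2) + 3 * s * (z1 + z2))"
    unfolding P_Y_def by (simp add: power2_eq_square power3_eq_cube algebra_simps)
  have "0 \<le> 6 * y * (1 - s - z1 - z2) + 3 * s * (z1 + z2)"
  proof (cases "0 \<le> 1 - s - z1 - z2")
    case False
    then have "s * (1 - s - z1 - z2) \<le> y * (1 - s - z1 - z2)"
      using assms by (intro mult_right_mono_neg) auto
    moreover have "0 \<le> s * (2 * (1 - s) - z1 - z2)" using assms by simp
    ultimately show ?thesis by (simp add: algebra_simps)
  qed (use assms in simp)
  with diff assms show ?thesis by (metis diff_ge_0_iff_ge zero_le_mult_iff)
qed

lemma P_Z_mono_y:
  assumes "0 \<le> y1" "y1 \<le> y2" "y2 \<le> s" "0 \<le> z" "z \<le> 1 - s"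
  shows "P_Z s y1 z \<le> P_Z s y2 z"
proof -
  have diff: "P_Z s y2 z - P_Z s y1 z = (y2 - y1) * (3 * (1 - s - 2 * z) * (y1 + y2) + 6 * s * z)"
    unfolding P_Z_def by (simp add: power2_eq_square power3_eq_cube algebra_simps)
  have "0 \<le> 3 * (1 - s - 2 * z) * (y1 + y2) + 6 * s * z"
  proof (cases "0 \<le> 1 - s - 2 * z")
    case False
    then have "(1 - s - 2 * z) * (2 * s) \<le> (1 - s - 2 * z) * (y1 + y2)"
      using assms by (intro mult_left_mono_neg) auto
    moreover have "0 \<le> s * (1 - s - z)" using assms by simp
    ultimately show ?thesis by (simp add: algebra_simps)
  qed (use assms in simp)
  with diff assms show ?thesis by (metis diff_ge_0_iff_ge zero_le_mult_iff)
qed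

lemma P_Z_mono_z:
  assumes "0 \<le> y" "y \<le> s" "0 \<le> z1" "z1 \<le> z2" "z2 \<le> 1 - s"
  shows "P_Z s y z1 \<le> P_Z s y z2"
proof -
  have diff: "P_Z s y z2 - P_Z s y z1
      = (z2 - z1) * (3 * (1 - s) * (z1 + z2) - 2 * (z1\<^sup>2 + z1 * z2 + z2\<^sup>2) + 6 * (s - y) * y)"
    unfolding P_Z_def by (simp add: power2_eq_square power3_eq_cube algebra_simps)
  have "z1 * z1 \<le> (1 - s) * z1" "z2 * z2 \<le> (1 - s) * z2"
      "z1 * z2 \<le> (1 - s) * z1" "z1 * z2 \<le> (1 - s) * z2"
    using assms by (auto intro: mult_right_mono mult_left_mono order_trans)
  moreover have "0 \<le> (s - y) * y" using assms by simp
  ultimately have "0 \<le> 3 * (1 - s) * (z1 + z2) - 2 * (z1\<^sup>2 + z1 * z2 + z2\<^sup>2) + 6 * (s - y) * y"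
    by (simp add: power2_eq_square algebra_simps)
  with diff assms show ?thesis by (metis diff_ge_0_iff_ge zero_le_mult_iff)
qed

lemma P_Y_mono:
  assumes "0 \<le> y1" "y1 \<le> y2" "y2 \<le> s" "0 \<le> z1" "z1 \<le> z2" "z2 \<le> 1 - s"
  shows "P_Y s y1 z1 \<le> P_Y s y2 z2"
  using P_Y_mono_y[of y1 y2 s z1] P_Y_mono_z[of y2 s z1 z2] assms by force

lemma P_Z_mono:
  assumes "0 \<le> y1" "y1 \<le> y2" "y2 \<le> s" "0 \<le> z1" "z1 \<le> z2" "z2 \<le> 1 - s"
  shows "P_Z s y1 z1 \<le> P_Z s y2 z2"
  using P_Z_mono_y[of y1 y2 s z1] P_Z_mono_z[of y2 s z1 z2] assms by force

lemma P_step_admissible: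
  assumes "admissible (x, y, z)"
  shows "admissible (P_step (x, y, z))"
proof -
  define s where "s = x + y"
  have h: "0 \<le> y" "2 * y \<le> s" "0 < z" "2 * z \<le> 1 - s" using assms unfolding s_def by auto
  have "P_Y s 0 0 = 0" "0 < P_Z s 0 z" unfolding P_Y_def P_Z_def using h by (simp_all add: add_nonneg_pos)
  moreover have "P_Y s 0 0 \<le> P_Y s y z" "P_Z s 0 z \<le> P_Z s y z"
    using h by (intro P_Y_mono P_Z_mono; simp)+
  text \<open>The upper bounds are attained at the corner where \<open>p\<^sub>Y = p\<^sub>X\<close> and \<open>p\<^sub>Z = p\<^sub>I\<close>.\<close>
  moreover have "P_Y s y z \<le> P_Y s (s/2) ((1 - s)/2)" "P_Z s y z \<le> P_Z s (s/2) ((1 - s)/2)"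
    using h by (intro P_Y_mono P_Z_mono; simp)+
  moreover have "2 * P_Y s (s/2) ((1 - s)/2) = P_sum s" "2 * P_Z s (s/2) ((1 - s)/2) = 1 - P_sum s"
    unfolding P_Y_def P_Z_def P_sum_def by (simp_all add: power2_eq_square power3_eq_cube field_simps)
  ultimately show ?thesis unfolding P_step_eq[OF s_def[symmetric]] by simp
qed

lemma P_step_yz_le:
  assumes "admissible (x1, y1, z1)" "admissible (x2, y2, z2)" "yz_le (x1, y1, z1) (x2, y2, z2)"
  shows "yz_le (P_step (x1, y1, z1)) (P_step (x2, y2, z2))"
proof -
  define s where "s = x1 + y1"
  have s2: "x2 + y2 = s" using assms(3) unfolding s_def by simp
  have h: "0 \<le> y1" "y1 \<le> y2" "y2 \<le> s" "0 \<le> z1" "z1 \<le> z2" "z2 \<le> 1 - s"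
    using assms s2 unfolding s_def by auto
  show ?thesis
    using P_Y_mono[OF h] P_Z_mono[OF h] P_step_eq[OF s_def[symmetric]] P_step_eq[OF s2] by simp
qed

lemma apply_steps_admissible:
  "admissible t \<Longrightarrow> admissible (apply_steps ss t)"
proof (induction ss arbitrary: t)
  case (Cons b ss)
  then show ?case
    by (cases t) (simp add: B_step_admissible_of_admissible P_step_admissible)
qed simp

lemma apply_steps_yz_le:
  "admissible t1 \<Longrightarrow> admissible t2 \<Longrightarrow> yz_le t1 t2 \<Longrightarrow>
   yz_le (apply_steps ss t1) (apply_steps ss t2)"
proof (induction ss arbitrary: t1 t2)
  case (Cons b ss)
  obtain x1 y1 z1 x2 y2 z2 where t: "t1 = (x1, y1, z1)" "t2 = (x2, y2, z2)"
    by (cases t1, cases t2) auto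
  show ?case
    using Cons t
    by (simp add: B_step_admissible_of_admissible P_step_admissible
        B_step_yz_le_of_admissible P_step_yz_le)
qed simp

lemma H2_has_real_derivative:
  assumes "0 < x" "x < 1"
  shows "(H2 has_real_derivative (log 2 (1 - x) - log 2 x)) (at x)"
proof -
  have "((\<lambda>x. - x * log 2 x - (1 - x) * log 2 (1 - x)) has_real_derivative
      (log 2 (1 - x) - log 2 x)) (at x)"
    using assms by (auto intro!: derivative_eq_intros)
  then show ?thesis by (simp add: H2_def [abs_def])
qed

lemma H2_mono:
  assumes "0 < p" "p \<le> q" "q \<le> 1/2"
  shows "H2 p \<le> H2 q"
proof (rule DERIV_nonneg_imp_increasing_open[OF assms(2)])
  fix x assume x: "p < x" "x < q"
  then have "log 2 x \<le> log 2 (1 - x)" using assms by simp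
  then show "\<exists>y. (H2 has_real_derivative y) (at x) \<and> 0 \<le> y"
    using H2_has_real_derivative[of x] x assms by auto
next
  show "continuous_on {p..q} H2"
    using assms by (auto intro!: continuous_at_imp_continuous_on DERIV_isCont[OF H2_has_real_derivative])
qed

fun key_rate :: "real \<times> real \<times> real \<Rightarrow> real" where
  "key_rate (x, y, z) = 1 - H2 (x + y) - H2 (z + y)"

lemma rate_eq_key_rate: "rate ss eb a = key_rate (apply_steps ss (eb - a, a, 3/2 * eb - a))"
  unfolding rate_def by (simp split: prod.split)

lemma key_rate_antimono:
  assumes "admissible t1" "admissible t2" "yz_le t1 t2"
  shows "key_rate t2 \<le> key_rate t1"
proof -
  obtain x1 y1 z1 x2 y2 z2 where t: "t1 = (x1, y1, z1)" "t2 = (x2, y2, z2)"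
    by (cases t1, cases t2) auto
  have "H2 (z1 + y1) \<le> H2 (z2 + y2)" using assms unfolding t by (intro H2_mono) auto
  then show ?thesis using assms(3) unfolding t by simp
qed

theorem corollary1:
  fixes eb :: real and ss :: "bool list"
  assumes "0 < eb" and "eb < 1/3"
    and "ss \<noteq> []" and "hd ss"
  shows "\<forall>a \<in> {eb/2 .. eb}. rate ss eb (eb/2) \<le> rate ss eb a"
proof
  fix a assume a: "a \<in> {eb/2 .. eb}"
  obtain ss' where ss: "ss = True # ss'" using assms(3,4) by (cases ss) auto
  define t where "t b = B_step (eb - b, b, 3/2 * eb - b)" for b
  have admissible: "admissible (t b)" if "b \<in> {eb/2 .. eb}" for b
    unfolding t_def using that assms by (intro B_step_admissible) auto
  have "(eb - a) * (eb - (eb - a)) \<le> eb/2 * (eb - eb/2)"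
    "(3/2 * eb - a) * (1 - eb - (3/2 * eb - a)) \<le> eb * (1 - eb - eb)"
    using a assms by (intro mult_diff_self_mono; simp)+
  then have "yz_le (t a) (t (eb/2))"
    unfolding t_def by (intro B_step_yz_le) (auto simp: algebra_simps)
  then have "key_rate (apply_steps ss' (t (eb/2))) \<le> key_rate (apply_steps ss' (t a))"
    using a assms by (intro key_rate_antimono apply_steps_admissible apply_steps_yz_le admissible) auto
  then show "rate ss eb (eb/2) \<le> rate ss eb a"
    unfolding rate_eq_key_rate ss t_def by simp
qed

end
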